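(* Consider the scheduling policy SIS, with ties broken arbitrarily, with a transmission oracle in $TO_h$ and proactive hearing control $P$, against an adversary $\mathcal{A}(b,r)$ with $0\le r<1/h$. Define $k_1=b$ and $k_{i+1}=\frac{k_i+b}{1-rh}$. When a packet $p$ arrives at the $i$-th queue $v_i$ on its path, then there are at most $k_i-1$ packets requiring any queue in the path of $p$ (i.e., for each node on the path of $p$, at most $k_i-1$ packets in the system that still have to pass through that node) with a priority higher than that of $p$.
   Context: Multi-hop radio network model: a network is a simple graph with $n$ nodes; time is divided into synchronous rounds. Packets are injected by an adversary, each with its complete path fixed at injection. Each node keeps a single, unbounded queue of packets to be forwarded. In each round a node transmits at most one message; a node $w$ hears a message of a neighbor $u$ in a round iff $u$ is the only neighbor of $w$ transmitting in that round. When $v$ transmits a packet whose next node on its path is $w$ and $w$ hears it, the packet leaves $v$ and is absorbed at $w$ or appended to $w$'s queue. A transmission oracle tells each node in each round whether to transmit. Proactive hearing control $P$: in a round in which the oracle tells $v$ to transmit, $v$ first learns which neighbors would hear its transmission, and the scheduling policy selects a packet among the queued packets whose next node is one of these neighbors (if any), which is then transmitted and heard. A directed link $(u,w)$ is up in a round if a packet transmitted by $u$ to $w$ would be heard by $w$; $TO_h$ is the class of transmission oracles under which every link is up at least once in every $h$ consecutive rounds. An adversary $\mathcal{A}(b,r)$ ($b$ positive integer, $0\le r\le1$) specifies each injected packet's path and satisfies: for every interval $\tau$ of consecutive rounds and every node $v$, the number of packets injected during $\tau$ whose path contains $v$ is at most $r|\tau|+b$. SIS (Shortest-In-System) gives priority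 to the packet that has been in the system for the shortest time. *)

theory Defs
  imports Main "HOL.Real"
begin

definition simple_graph :: "'v set \<Rightarrow> ('v \<Rightarrow> 'v \<Rightarrow> bool) \<Rightarrow> bool" where
  "simple_graph V E \<longleftrightarrow> finite V \<and>
     (\<forall>u w. E u w \<longrightarrow> u \<in> V \<and> w \<in> V \<and> u \<noteq> w \<and> E w u)"

definition valid_path :: "'v set \<Rightarrow> ('v \<Rightarrow> 'v \<Rightarrow> bool) \<Rightarrow> 'v list \<Rightarrow> bool" where
  "valid_path V E xs \<longleftrightarrow> 2 \<le> length xs \<and> distinct xs \<and> set xs \<subseteq> V \<and>
     (\<forall>j. Suc j < length xs \<longrightarrow> E (xs ! j) (xs ! Suc j))"

text \<open>Transmission oracle tr t v: whether node v is told to transmit in round t.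
w hears u in round t iff u transmits and u is the only neighbour of w transmitting.\<close>
definition link_up :: "('v \<Rightarrow> 'v \<Rightarrow> bool) \<Rightarrow> (nat \<Rightarrow> 'v \<Rightarrow> bool) \<Rightarrow> nat \<Rightarrow> 'v \<Rightarrow> 'v \<Rightarrow> bool" where
  "link_up E tr t u w \<longleftrightarrow> E u w \<and> tr t u \<and> (\<forall>x. E x w \<and> tr t x \<longrightarrow> x = u)"

definition in_TO :: "('v \<Rightarrow> 'v \<Rightarrow> bool) \<Rightarrow> nat \<Rightarrow> (nat \<Rightarrow> 'v \<Rightarrow> bool) \<Rightarrow> bool" where
  "in_TO E h tr \<longleftrightarrow>
     (\<forall>u w s. E u w \<longrightarrow> (\<exists>t. s \<le> t \<and> t < s + h \<and> link_up E tr t u w))"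

text \<open>Adversary A(b,r): Pk is the set of injected packets, injt q the injection round
and path q the path of packet q.\<close>
definition adversary :: "'p set \<Rightarrow> ('p \<Rightarrow> 'v list) \<Rightarrow> ('p \<Rightarrow> nat) \<Rightarrow> nat \<Rightarrow> real \<Rightarrow> bool" where
  "adversary Pk path injt b r \<longleftrightarrow>
     (\<forall>s l v. finite {q \<in> Pk. s \<le> injt q \<and> injt q < s + l \<and> v \<in> set (path q)} \<and>
        real (card {q \<in> Pk. s \<le> injt q \<and> injt q < s + l \<and> v \<in> set (path q)})
          \<le> r * real l + real b)"

text \<open>SIS priority with ties broken arbitrarily (but fixed): hi p q means p has higher
priority than q; a strict total order on the packets in which packets injected later
have higher priority.\<close>
definition sis_priority :: "'p set \<Rightarrow> ('p \<Rightarrow> nat) \<Rightarrow> ('p \<Rightarrow> 'p \<Rightarrow> bool) \<Rightarrow> bool" where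
  "sis_priority Pk injt hi \<longleftrightarrow>
     (\<forall>p\<in>Pk. \<forall>q\<in>Pk. hi p q \<longrightarrow> \<not> hi q p) \<and>
     (\<forall>p\<in>Pk. \<forall>q\<in>Pk. \<forall>x\<in>Pk. hi p q \<longrightarrow> hi q x \<longrightarrow> hi p x) \<and>
     (\<forall>p\<in>Pk. \<forall>q\<in>Pk. p \<noteq> q \<longrightarrow> hi p q \<or> hi q p) \<and>
     (\<forall>p\<in>Pk. \<forall>q\<in>Pk. injt q < injt p \<longrightarrow> hi p q)"

text \<open>Execution state: pos t q is the index (in path q) of the node in whose queue q is
at the beginning of round t (for t \<ge> injt q).  A packet injected in round t is in the
queue of its first node at the beginning of round t.  It is absorbed once it reaches
the last node of its path.\<close>
definition in_sys :: "'p set \<Rightarrow> ('p \<Rightarrow> 'v list) \<Rightarrow> ('p \<Rightarrow> nat) \<Rightarrow> (nat \<Rightarrow> 'p \<Rightarrow> nat)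
    \<Rightarrow> nat \<Rightarrow> 'p \<Rightarrow> bool" where
  "in_sys Pk path injt pos t q \<longleftrightarrow> q \<in> Pk \<and> injt q \<le> t \<and> pos t q < length (path q) - 1"

text \<open>Proactive hearing control: in round t a node v told to transmit can send only a
queued packet whose next node would hear it.\<close>
definition eligible :: "('v \<Rightarrow> 'v \<Rightarrow> bool) \<Rightarrow> (nat \<Rightarrow> 'v \<Rightarrow> bool) \<Rightarrow> 'p set \<Rightarrow> ('p \<Rightarrow> 'v list)
    \<Rightarrow> ('p \<Rightarrow> nat) \<Rightarrow> (nat \<Rightarrow> 'p \<Rightarrow> nat) \<Rightarrow> nat \<Rightarrow> 'v \<Rightarrow> 'p \<Rightarrow> bool" where
  "eligible E tr Pk path injt pos t v q \<longleftrightarrow>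
     in_sys Pk path injt pos t q \<and> path q ! pos t q = v \<and>
     tr t v \<and> link_up E tr t v (path q ! Suc (pos t q))"

definition sent :: "('v \<Rightarrow> 'v \<Rightarrow> bool) \<Rightarrow> (nat \<Rightarrow> 'v \<Rightarrow> bool) \<Rightarrow> 'p set \<Rightarrow> ('p \<Rightarrow> 'v list)
    \<Rightarrow> ('p \<Rightarrow> nat) \<Rightarrow> ('p \<Rightarrow> 'p \<Rightarrow> bool) \<Rightarrow> (nat \<Rightarrow> 'p \<Rightarrow> nat) \<Rightarrow> nat \<Rightarrow> 'p \<Rightarrow> bool" where
  "sent E tr Pk path injt hi pos t q \<longleftrightarrow>
     eligible E tr Pk path injt pos t (path q ! pos t q) q \<and>
     (\<forall>q'. eligible E tr Pk path injt pos t (path q ! pos t q) q' \<and> q' \<noteq> q \<longrightarrow> hi q q')"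

definition sis_execution :: "('v \<Rightarrow> 'v \<Rightarrow> bool) \<Rightarrow> (nat \<Rightarrow> 'v \<Rightarrow> bool) \<Rightarrow> 'p set
    \<Rightarrow> ('p \<Rightarrow> 'v list) \<Rightarrow> ('p \<Rightarrow> nat) \<Rightarrow> ('p \<Rightarrow> 'p \<Rightarrow> bool) \<Rightarrow> (nat \<Rightarrow> 'p \<Rightarrow> nat) \<Rightarrow> bool" where
  "sis_execution E tr Pk path injt hi pos \<longleftrightarrow>
     (\<forall>q\<in>Pk. \<forall>t. (t \<le> injt q \<longrightarrow> pos t q = 0) \<and>
        (injt q \<le> t \<longrightarrow> pos (Suc t) q =
           (if sent E tr Pk path injt hi pos t q then Suc (pos t q) else pos t q)))"

definition arrives :: "'p set \<Rightarrow> ('p \<Rightarrow> 'v list) \<Rightarrow> ('p \<Rightarrow> nat) \<Rightarrow> (nat \<Rightarrow> 'p \<Rightarrow> nat)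
    \<Rightarrow> nat \<Rightarrow> 'p \<Rightarrow> nat \<Rightarrow> bool" where
  "arrives Pk path injt pos t p j \<longleftrightarrow>
     in_sys Pk path injt pos t p \<and> pos t p = j \<and> (t = injt p \<or> pos (t - 1) p \<noteq> j)"

text \<open>kseq b r h j = k_(j+1): k_1 = b, k_(i+1) = (k_i + b)/(1 - r h).\<close>
primrec kseq :: "nat \<Rightarrow> real \<Rightarrow> nat \<Rightarrow> nat \<Rightarrow> real" where
  "kseq b r h 0 = real b"
| "kseq b r h (Suc j) = (kseq b r h j + real b) / (1 - r * real h)"

text \<open>Packets in the system at the beginning of round t with priority higher than p
that still have to pass through node u (u in the remaining part of their path,
including the node where they are currently queued).\<close>
definition higher_requiring :: "'p set \<Rightarrow> ('p \<Rightarrow> 'v list) \<Rightarrow> ('p \<Rightarrow> nat) \<Rightarrow> ('p \<Rightarrow> 'p \<Rightarrow> bool)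
    \<Rightarrow> (nat \<Rightarrow> 'p \<Rightarrow> nat) \<Rightarrow> nat \<Rightarrow> 'p \<Rightarrow> 'v \<Rightarrow> 'p set" where
  "higher_requiring Pk path injt hi pos t p u =
     {q. q \<noteq> p \<and> in_sys Pk path injt pos t q \<and> hi q p \<and> u \<in> set (drop (pos t q) (path q))}"

end

theory Submission
  imports Defs
begin

text \<open>Induction on the index of the node at which p arrives.  At its first node p meets only
  packets injected in the same round, at most b of them.  Suppose p reached node v_i at round
  t' and node v_(i+1) at round t' + D.  Every h rounds the link v_i \<rightarrow> v_(i+1) is up; p is then
  eligible, so since it was not sent, a packet of higher priority left v_i instead.  Each such
  packet either required v_i already at t' (at most k_i - 1 of them) or was injected later (at
  most r D + b), and leaves v_i only once.  Hence D \<le> h (k_i + r D + b), i.e.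
  D (1 - r h) \<le> h (k_i + b), and the packets requiring a node u at t' + D number at most
  k_i - 1 + r D + b \<le> k_(i+1) - 1.\<close>

lemma finite_has_greatest:
  assumes trans: "\<forall>p\<in>P. \<forall>q\<in>P. \<forall>x\<in>P. hi p q \<longrightarrow> hi q x \<longrightarrow> hi p x"
    and total: "\<forall>p\<in>P. \<forall>q\<in>P. p \<noteq> q \<longrightarrow> hi p q \<or> hi q p"
    and "finite S" "S \<noteq> {}" "S \<subseteq> P"
  shows "\<exists>q\<in>S. \<forall>q'\<in>S. q' \<noteq> q \<longrightarrow> hi q q'"
  using assms(3-5)
proof (induction S rule: finite_ne_induct)
  case (singleton x)
  then show ?case by auto
next
  case (insert x F)
  then obtain q where q: "q \<in> F" "\<forall>q'\<in>F. q' \<noteq> q \<longrightarrow> hi q q'" by auto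
  show ?case
  proof (cases "hi q x")
    case True
    then show ?thesis using q by auto
  next
    case False
    then have "hi x q" using total insert q by (metis insert_subset subsetD)
    then have "\<forall>q'\<in>insert x F. q' \<noteq> x \<longrightarrow> hi x q'"
      using q trans insert by (metis insert_iff insert_subset subsetD)
    then show ?thesis by auto
  qed
qed

lemma card_le_of_hits_in_windows:
  fixes h :: nat
  assumes "finite S"
    and hit: "\<forall>k<w. \<exists>\<tau> q. a + k * h \<le> \<tau> \<and> \<tau> < a + k * h + h \<and> q \<in> S \<and> P \<tau> q"
    and unique: "\<And>\<tau>1 \<tau>2 q. P \<tau>1 q \<Longrightarrow> P \<tau>2 q \<Longrightarrow> \<tau>1 = \<tau>2"
  shows "w \<le> card S"
proof -
  have "\<forall>k. \<exists>x. k < w \<longrightarrow> a + k * h \<le> fst x \<and> fst x < a + k * h + h \<and>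
      snd x \<in> S \<and> P (fst x) (snd x)"
    using hit by auto
  then obtain f where f: "\<And>k. k < w \<Longrightarrow> a + k * h \<le> fst (f k) \<and> fst (f k) < a + k * h + h \<and>
      snd (f k) \<in> S \<and> P (fst (f k)) (snd (f k))"
    by metis
  have "k1 = k2" if "k1 < w" "k2 < w" "snd (f k1) = snd (f k2)" for k1 k2
  proof -
    have "fst (f k1) = fst (f k2)" using f that unique by metis
    then have "k1 * h < Suc k2 * h" "k2 * h < Suc k1 * h"
      using f[OF that(1)] f[OF that(2)] by (simp_all add: add.commute)
    then have "k1 < Suc k2" "k2 < Suc k1" by (metis mult_less_cancel2)+
    then show ?thesis by simp
  qed
  then have "inj_on (snd \<circ> f) {..<w}" by (auto intro: inj_onI)
  moreover have "(snd \<circ> f) ` {..<w} \<subseteq> S" using f by auto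
  ultimately show ?thesis using card_inj_on_le[OF _ _ \<open>finite S\<close>] by fastforce
qed

lemma kseq_recursion_bound:
  fixes r K X b :: real and D h :: nat
  assumes "0 \<le> r" "r * h < 1"
    and wait: "real D \<le> real h * (K + r * D + b)"
    and count: "X \<le> K - 1 + r * D + b"
  shows "X \<le> (K + b) / (1 - r * h) - 1"
proof -
  have "r * (D * (1 - r * h)) \<le> r * (h * (K + b))"
    using wait \<open>0 \<le> r\<close> by (intro mult_left_mono) (auto simp: algebra_simps)
  then have "(K + r * D + b) * (1 - r * h) \<le> K + b" by (simp add: algebra_simps)
  then have "K + r * D + b \<le> (K + b) / (1 - r * h)"
    using \<open>r * h < 1\<close> by (simp add: le_divide_eq)
  then show ?thesis using count by simp
qed

lemma less_mult_Suc_div: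
  fixes h :: nat
  assumes "0 < h"
  shows "n < h * (n div h + 1)"
proof -
  have "n = h * (n div h) + n mod h" by simp
  moreover have "n mod h < h" using assms by simp
  moreover have "h * (n div h + 1) = h * (n div h) + h" by simp
  ultimately show ?thesis by linarith
qed

locale sis_setting =
  fixes V :: "'v set" and E :: "'v \<Rightarrow> 'v \<Rightarrow> bool"
    and tr :: "nat \<Rightarrow> 'v \<Rightarrow> bool" and h :: nat
    and Pk :: "'p set" and path :: "'p \<Rightarrow> 'v list" and injt :: "'p \<Rightarrow> nat"
    and b :: nat and r :: real
    and hi :: "'p \<Rightarrow> 'p \<Rightarrow> bool" and pos :: "nat \<Rightarrow> 'p \<Rightarrow> nat"
  assumes paths: "\<forall>q\<in>Pk. valid_path V E (path q)"
    and h_pos: "1 \<le> h" and links_up: "in_TO E h tr"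
    and r_nonneg: "0 \<le> r" and r_less: "r < 1 / real h"
    and adv: "adversary Pk path injt b r"
    and priority: "sis_priority Pk injt hi"
    and exec: "sis_execution E tr Pk path injt hi pos"
begin

abbreviation "present \<equiv> in_sys Pk path injt pos"
abbreviation "sends \<equiv> sent E tr Pk path injt hi pos"
abbreviation "arrival \<equiv> arrives Pk path injt pos"
abbreviation "higher \<equiv> higher_requiring Pk path injt hi pos"

definition injected :: "nat \<Rightarrow> nat \<Rightarrow> 'v \<Rightarrow> 'p set" where
  "injected s l v = {q \<in> Pk. s \<le> injt q \<and> injt q < s + l \<and> v \<in> set (path q)}"

lemma finite_injected: "finite (injected s l v)"
  using adv unfolding adversary_def injected_def by blast

lemma card_injected_le: "real (card (injected s l v)) \<le> r * l + b"
  using adv unfolding adversary_def injected_def by blast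

lemma injected_mono: "l \<le> l' \<Longrightarrow> injected s l v \<subseteq> injected s l' v"
  unfolding injected_def by auto

lemma rh_less_1: "r * h < 1"
  using r_less h_pos by (simp add: field_simps)

lemma r_less_1: "r < 1"
proof -
  have "r * 1 \<le> r * h" using r_nonneg h_pos by (intro mult_left_mono) auto
  then show ?thesis using rh_less_1 by simp
qed

lemma exists_highest_priority:
  "finite S \<Longrightarrow> S \<noteq> {} \<Longrightarrow> S \<subseteq> Pk \<Longrightarrow> \<exists>q\<in>S. \<forall>q'\<in>S. q' \<noteq> q \<longrightarrow> hi q q'"
  using finite_has_greatest[of Pk hi S] priority unfolding sis_priority_def by blast

lemma pos_injt: "q \<in> Pk \<Longrightarrow> pos (injt q) q = 0"
  using exec unfolding sis_execution_def by blast

lemma pos_Suc: "q \<in> Pk \<Longrightarrow> injt q \<le> s \<Longrightarrow>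
    pos (Suc s) q = (if sends s q then Suc (pos s q) else pos s q)"
  using exec unfolding sis_execution_def by blast

lemma pos_Suc_le: "q \<in> Pk \<Longrightarrow> injt q \<le> s \<Longrightarrow> pos (Suc s) q \<le> Suc (pos s q)"
  using pos_Suc[of q s] by auto

lemma pos_mono:
  assumes "q \<in> Pk" "injt q \<le> s" "s \<le> s'"
  shows "pos s q \<le> pos s' q"
  using assms(3)
proof (induction s' rule: dec_induct)
  case (step n)
  then show ?case using pos_Suc[of q n] assms by (auto split: if_splits)
qed simp

lemma present_remaining_node:
  "present s q \<Longrightarrow> path q ! pos s q \<in> set (drop (pos s q) (path q))"
  unfolding in_sys_def by (metis Cons_nth_drop_Suc less_diff_conv list.set_intros(1) add_lessD1)

lemma finite_higher_requiring: "finite (higher t p u)"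
proof (rule rev_finite_subset)
  show "finite (injected 0 (Suc t) u)" by (rule finite_injected)
  show "higher t p u \<subseteq> injected 0 (Suc t) u"
    unfolding higher_requiring_def in_sys_def injected_def by (auto dest: in_set_dropD)
qed

lemma higher_requiring_subset:
  assumes "t' \<le> t"
  shows "higher t p u \<subseteq> higher t' p u \<union> injected (Suc t') (t - t') u"
proof
  fix q assume q: "q \<in> higher t p u"
  then have q_facts: "q \<in> Pk" "injt q \<le> t" "pos t q < length (path q) - 1"
      "u \<in> set (drop (pos t q) (path q))"
    unfolding higher_requiring_def in_sys_def by auto
  show "q \<in> higher t' p u \<union> injected (Suc t') (t - t') u"
  proof (cases "injt q \<le> t'")
    case True
    then have "pos t' q \<le> pos t q" using pos_mono q_facts(1) assms by simp
    then have "u \<in> set (drop (pos t' q) (path q))"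
      using q_facts(4) set_drop_subset_set_drop[of "pos t' q" "pos t q" "path q"] by blast
    then show ?thesis
      using q q_facts \<open>pos t' q \<le> pos t q\<close> True
      unfolding higher_requiring_def in_sys_def by auto
  next
    case False
    then show ?thesis
      using q_facts assms unfolding injected_def by (auto dest: in_set_dropD)
  qed
qed

lemma card_higher_requiring_at_injection:
  assumes "p \<in> Pk" "u \<in> set (path p)"
  shows "real (card (higher (injt p) p u)) \<le> real b - 1"
proof -
  let ?S = "injected (injt p) 1 u"
  have "higher (injt p) p u \<subseteq> ?S - {p}"
  proof
    fix q assume "q \<in> higher (injt p) p u"
    then have q: "q \<in> Pk" "injt q \<le> injt p" "hi q p" "q \<noteq> p" "u \<in> set (path q)"
      unfolding higher_requiring_def in_sys_def by (auto dest: in_set_dropD)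
    have "\<not> injt q < injt p"
      using priority q(1,3) assms(1) unfolding sis_priority_def by blast
    then show "q \<in> ?S - {p}" using q unfolding injected_def by simp
  qed
  then have "card (higher (injt p) p u) \<le> card (?S - {p})"
    using finite_injected by (intro card_mono) auto
  moreover have "p \<in> ?S" using assms unfolding injected_def by simp
  then have "card (?S - {p}) + 1 = card ?S"
    using card.remove[OF finite_injected] by simp
  moreover have "real (card ?S) < real (b + 1)"
    using card_injected_le[of "injt p" 1 u] r_less_1 by simp
  then have "card ?S \<le> b" by simp
  ultimately have "card (higher (injt p) p u) + 1 \<le> b" by linarith
  then show ?thesis using of_nat_mono by fastforce
qed

lemma arrives_first_node:
  assumes "p \<in> Pk" "arrival t p 0"
  shows "t = injt p"
proof (rule ccontr)
  assume "t \<noteq> injt p"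
  then have "injt p \<le> t - 1" "pos (t - 1) p \<noteq> 0" "pos t p = 0"
    using assms(2) unfolding arrives_def in_sys_def by auto
  then show False using pos_mono[OF assms(1), of "t - 1" t] by simp
qed

lemma arrives_next_node:
  assumes "p \<in> Pk" "arrival t p (Suc i)"
  shows "injt p < t" "pos (t - 1) p = i"
proof -
  have at_t: "injt p \<le> t" "pos t p = Suc i" "t = injt p \<or> pos (t - 1) p \<noteq> Suc i"
    using assms(2) unfolding arrives_def in_sys_def by auto
  then show "injt p < t" using pos_injt[OF assms(1)] by (metis le_neq_implies_less nat.distinct(1))
  then have "injt p \<le> t - 1" "t = Suc (t - 1)" by auto
  then have "pos (t - 1) p \<le> Suc i" "Suc i \<le> Suc (pos (t - 1) p)"
    using pos_mono[OF assms(1)] pos_Suc_le[OF assms(1)] at_t(2) by (metis le_refl diff_le_self)+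
  then show "pos (t - 1) p = i" using at_t \<open>injt p < t\<close> by linarith
qed

lemma arrival_before:
  assumes "p \<in> Pk" "injt p \<le> s" "pos s p = i" "i < length (path p) - 1"
  shows "\<exists>t'\<le>s. arrival t' p i \<and> (\<forall>x. t' \<le> x \<longrightarrow> x \<le> s \<longrightarrow> pos x p = i)"
  using assms(2,3)
proof (induction s rule: dec_induct)
  case base
  then show ?case using assms unfolding arrives_def in_sys_def by auto
next
  case (step n)
  show ?case
  proof (cases "pos n p = i")
    case True
    then obtain t' where "t' \<le> n" "arrival t' p i" "\<forall>x. t' \<le> x \<longrightarrow> x \<le> n \<longrightarrow> pos x p = i"
      using step.IH by blast
    then show ?thesis using step.prems by (metis le_Suc_eq le_SucI)
  next
    case False
    then have "arrival (Suc n) p i"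
      using assms step unfolding arrives_def in_sys_def by auto
    then show ?thesis using step.prems by (metis le_antisym order_refl)
  qed
qed

lemma previous_arrival:
  assumes "p \<in> Pk" "arrival t p (Suc i)"
  obtains t' where "t' < t" "arrival t' p i" "\<forall>s. t' \<le> s \<longrightarrow> s < t \<longrightarrow> pos s p = i"
proof -
  have arrived: "injt p < t" "pos (t - 1) p = i"
    by (rule arrives_next_node[OF assms])+
  have "i < length (path p) - 1"
    using assms(2) unfolding arrives_def in_sys_def by simp
  moreover have "injt p \<le> t - 1" using arrived(1) by simp
  ultimately obtain t' where t': "t' \<le> t - 1" "arrival t' p i"
      "\<forall>s. t' \<le> s \<longrightarrow> s \<le> t - 1 \<longrightarrow> pos s p = i"
    using arrival_before[OF assms(1) _ arrived(2)] by blast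
  moreover have "t' < t" using t'(1) arrived(1) by linarith
  ultimately show ?thesis using that by simp
qed

lemma sent_once_from_node:
  assumes "sends \<tau>1 q" "sends \<tau>2 q" "path q ! pos \<tau>1 q = path q ! pos \<tau>2 q"
  shows "\<tau>1 = \<tau>2"
proof (rule ccontr)
  have facts: "q \<in> Pk" "injt q \<le> \<tau>1" "injt q \<le> \<tau>2"
      "pos \<tau>1 q < length (path q) - 1" "pos \<tau>2 q < length (path q) - 1"
    using assms unfolding sent_def eligible_def in_sys_def by auto
  have "distinct (path q)" using paths facts(1) unfolding valid_path_def by blast
  then have same_pos: "pos \<tau>1 q = pos \<tau>2 q"
    using assms(3) facts(4,5) nth_eq_iff_index_eq by fastforce
  have moved: "pos \<sigma> q < pos \<sigma>' q" if "sends \<sigma> q" "injt q \<le> \<sigma>" "\<sigma> < \<sigma>'" for \<sigma> \<sigma>'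
    using pos_Suc[OF facts(1) that(2)] pos_mono[OF facts(1), of "Suc \<sigma>" \<sigma>'] that by auto
  assume "\<tau>1 \<noteq> \<tau>2"
  then show False
    using moved[OF assms(1) facts(2)] moved[OF assms(2) facts(3)] same_pos
    by (metis less_irrefl linorder_neqE_nat)
qed

lemma overtaken_while_waiting:
  assumes "p \<in> Pk" "present \<tau> p" "pos (Suc \<tau>) p = pos \<tau> p"
    and "link_up E tr \<tau> (path p ! pos \<tau> p) (path p ! Suc (pos \<tau> p))"
  shows "\<exists>q. sends \<tau> q \<and> path q ! pos \<tau> q = path p ! pos \<tau> p \<and> q \<in> higher \<tau> p (path p ! pos \<tau> p)"
proof -
  let ?v = "path p ! pos \<tau> p"
  define El where "El = {q. eligible E tr Pk path injt pos \<tau> ?v q}"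
  have El_sub: "El \<subseteq> injected 0 (Suc \<tau>) ?v"
  proof
    fix q assume "q \<in> El"
    then have "present \<tau> q" "path q ! pos \<tau> q = ?v" unfolding El_def eligible_def by auto
    then show "q \<in> injected 0 (Suc \<tau>) ?v"
      using present_remaining_node[of \<tau> q] unfolding injected_def in_sys_def
      by (auto dest: in_set_dropD)
  qed
  have "p \<in> El" using assms unfolding El_def eligible_def link_up_def by auto
  moreover have "finite El" using finite_injected El_sub by (rule rev_finite_subset)
  moreover have "El \<subseteq> Pk" unfolding El_def eligible_def in_sys_def by auto
  ultimately obtain q where q: "q \<in> El" "\<forall>q'\<in>El. q' \<noteq> q \<longrightarrow> hi q q'"
    using exists_highest_priority by blast
  then have "sends \<tau> q" "path q ! pos \<tau> q = ?v" "present \<tau> q"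
    unfolding El_def sent_def eligible_def by auto
  moreover have "q \<noteq> p"
    using calculation(1) assms(1-3) pos_Suc[of p \<tau>] unfolding in_sys_def by auto
  then have "hi q p" using q(2) \<open>p \<in> El\<close> by (metis (no_types, lifting))
  ultimately show ?thesis
    using present_remaining_node[of \<tau> q] \<open>q \<noteq> p\<close> unfolding higher_requiring_def by auto
qed

lemma waiting_time_bound:
  assumes "p \<in> Pk" "arrival t' p i" "\<forall>s. t' \<le> s \<longrightarrow> s < t' + D \<longrightarrow> pos s p = i"
  shows "D \<le> h * (card (higher t' p (path p ! i) \<union> injected (Suc t') (D - 1) (path p ! i)) + 1)"
proof -
  let ?v = "path p ! i" and ?w = "(D - 1) div h"
  let ?S = "higher t' p ?v \<union> injected (Suc t') (D - 1) ?v"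
  have at_t': "injt p \<le> t'" "i < length (path p) - 1"
    using assms(2) unfolding arrives_def in_sys_def by auto
  have edge: "E ?v (path p ! Suc i)"
    using paths assms(1) at_t' unfolding valid_path_def by auto
  have "\<exists>\<tau> q. t' + k * h \<le> \<tau> \<and> \<tau> < t' + k * h + h \<and> q \<in> ?S \<and>
      sends \<tau> q \<and> path q ! pos \<tau> q = ?v" if "k < ?w" for k
  proof -
    obtain \<tau> where \<tau>: "t' + k * h \<le> \<tau>" "\<tau> < t' + k * h + h" "link_up E tr \<tau> ?v (path p ! Suc i)"
      using links_up edge unfolding in_TO_def by blast
    have "k * h + h \<le> ?w * h" using that by (metis Suc_leI add.commute mult_Suc mult_le_mono1)
    also have "\<dots> \<le> D - 1" by simp
    finally have \<tau>_range: "t' \<le> \<tau>" "Suc \<tau> < t' + D" using \<tau> by auto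
    then have "pos \<tau> p = i" "pos (Suc \<tau>) p = i" using assms(3) by auto
    moreover have "present \<tau> p" using assms(1) at_t' \<tau>_range calculation unfolding in_sys_def by auto
    ultimately obtain q where q: "sends \<tau> q" "path q ! pos \<tau> q = ?v" "q \<in> higher \<tau> p ?v"
      using overtaken_while_waiting[OF assms(1)] \<tau>(3) by force
    have "injected (Suc t') (\<tau> - t') ?v \<subseteq> injected (Suc t') (D - 1) ?v"
      using \<tau>_range by (intro injected_mono) linarith
    then have "q \<in> ?S" using higher_requiring_subset[OF \<tau>_range(1)] q(3) by blast
    then show ?thesis using \<tau> q by blast
  qed
  then have "?w \<le> card ?S"
    using finite_higher_requiring finite_injected sent_once_from_node
    by (intro card_le_of_hits_in_windows[where P = "\<lambda>\<tau> q. sends \<tau> q \<and> path q ! pos \<tau> q = ?v"])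
      auto
  then have "h * (?w + 1) \<le> h * (card ?S + 1)" by simp
  moreover have "D - 1 < h * (?w + 1)" using h_pos by (intro less_mult_Suc_div) simp
  ultimately show ?thesis by linarith
qed

lemma waiting_time_le:
  assumes "p \<in> Pk" "arrival t' p i" "\<forall>s. t' \<le> s \<longrightarrow> s < t' + D \<longrightarrow> pos s p = i"
    and "real (card (higher t' p (path p ! i))) \<le> K - 1"
  shows "real D \<le> real h * (K + r * D + b)"
proof -
  let ?A = "higher t' p (path p ! i)" and ?B = "injected (Suc t') (D - 1) (path p ! i)"
  have "real (card (?A \<union> ?B)) \<le> real (card ?A) + real (card ?B)"
    using of_nat_mono[OF card_Un_le[of ?A ?B]] by simp
  moreover have "r * (D - 1) \<le> r * D"
    using r_nonneg by (intro mult_left_mono) auto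
  ultimately have "real (card (?A \<union> ?B)) + 1 \<le> K + r * D + b"
    using assms(4) card_injected_le[of "Suc t'" "D - 1" "path p ! i"] by linarith
  then have "real h * (real (card (?A \<union> ?B)) + 1) \<le> real h * (K + r * D + b)"
    by (simp add: mult_left_mono)
  moreover have "real D \<le> real (h * (card (?A \<union> ?B) + 1))"
    using waiting_time_bound[OF assms(1-3)] of_nat_mono by blast
  then have "real D \<le> real h * (real (card (?A \<union> ?B)) + 1)" by (simp add: algebra_simps)
  ultimately show ?thesis by linarith
qed

lemma card_higher_requiring_growth:
  assumes "t' \<le> t"
  shows "real (card (higher t p u)) \<le> real (card (higher t' p u)) + r * (t - t') + b"
proof -
  have "card (higher t p u) \<le> card (higher t' p u \<union> injected (Suc t') (t - t') u)"
    using higher_requiring_subset[OF assms] finite_higher_requiring finite_injected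
    by (intro card_mono) auto
  also have "\<dots> \<le> card (higher t' p u) + card (injected (Suc t') (t - t') u)"
    by (rule card_Un_le)
  finally show ?thesis
    using card_injected_le[of "Suc t'" "t - t'" u] of_nat_mono by fastforce
qed

theorem card_higher_requiring_le_kseq:
  assumes "p \<in> Pk" "arrival t p j" "u \<in> set (path p)"
  shows "real (card (higher t p u)) \<le> kseq b r h j - 1"
  using assms(2,3)
proof (induction j arbitrary: t u)
  case 0
  then show ?case
    using arrives_first_node[OF assms(1) 0(1)] card_higher_requiring_at_injection[OF assms(1) 0(2)]
    by simp
next
  case (Suc i)
  obtain t' where t': "t' < t" "arrival t' p i" "\<forall>s. t' \<le> s \<longrightarrow> s < t \<longrightarrow> pos s p = i"
    using previous_arrival[OF assms(1) Suc.prems(1)] by blast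
  define D where "D = t - t'"
  have IH: "real (card (higher t' p v)) \<le> kseq b r h i - 1" if "v \<in> set (path p)" for v
    using Suc.IH t'(2) that by blast
  have "t' + D = t" using t'(1) unfolding D_def by simp
  have "i < length (path p) - 1"
    using t'(2) unfolding arrives_def in_sys_def by simp
  then have "real D \<le> real h * (kseq b r h i + r * D + b)"
    by (intro waiting_time_le[OF assms(1) t'(2)] IH) (use t'(3) \<open>t' + D = t\<close> in auto)
  moreover have "real (card (higher t p u)) \<le> kseq b r h i - 1 + r * D + b"
    using card_higher_requiring_growth[of t' t p u] t'(1) IH[OF Suc.prems(2)]
    unfolding D_def by simp
  ultimately show ?case
    using kseq_recursion_bound[OF r_nonneg rh_less_1] by simp
qed

end

theorem lemma4:
  fixes V :: "'v set" and E :: "'v \<Rightarrow> 'v \<Rightarrow> bool"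
    and tr :: "nat \<Rightarrow> 'v \<Rightarrow> bool" and h :: nat
    and Pk :: "'p set" and path :: "'p \<Rightarrow> 'v list" and injt :: "'p \<Rightarrow> nat"
    and b :: nat and r :: real
    and hi :: "'p \<Rightarrow> 'p \<Rightarrow> bool" and pos :: "nat \<Rightarrow> 'p \<Rightarrow> nat"
    and p :: 'p and t :: nat and j :: nat and u :: 'v
  assumes "simple_graph V E"
    and "\<forall>q\<in>Pk. valid_path V E (path q)"
    and "1 \<le> h" and "in_TO E h tr"
    and "0 < b" and "0 \<le> r" and "r < 1 / real h"
    and "adversary Pk path injt b r"
    and "sis_priority Pk injt hi"
    and "sis_execution E tr Pk path injt hi pos"
    and "p \<in> Pk"
    and "arrives Pk path injt pos t p j"
    and "u \<in> set (path p)"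
  shows "finite (higher_requiring Pk path injt hi pos t p u) \<and>
         real (card (higher_requiring Pk path injt hi pos t p u)) \<le> kseq b r h j - 1"
proof -
  interpret sis_setting V E tr h Pk path injt b r hi pos
    using assms by unfold_locales auto
  show ?thesis
    using finite_higher_requiring card_higher_requiring_le_kseq assms(11-13) by blast
qed

end
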